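(* There exist a stochastic two-armed bandit environment and two base algorithms $\mathcal{B}_1,\mathcal{B}_2$ for it, where $\mathcal{B}_1$ always plays an optimal arm (so $\mathcal{B}_1$ has zero regret), such that the following holds: when the two base algorithms are handed to the master in a uniformly random order, every master algorithm has regret $R(T)=\Omega\!\left(\frac{\sqrt{T}}{\log T}\right)$, i.e. there are constants $c>0$ and $T_0$, independent of the master, with $R(T)\ge c\,\frac{\sqrt T}{\log T}$ for all $T\ge T_0$.
   Context: Model selection (algorithm selection) problem: there is a stochastic $K$-armed bandit environment in which arm $a$ has a fixed reward distribution with mean $\mu_a$; let $\mu^*=\max_a\mu_a$. There are $M$ base algorithms (arbitrary, possibly randomized, bandit algorithms with internal state). A master algorithm interacts for $T$ rounds: in round $t$ it selects an index $j_t\in\{1,\dots,M\}$ based on its past observations; base $j_t$ chooses an arm $a_t$ according to its current state, the arm is played, the reward is observed by the master and passed to base $j_t$, which updates its state; bases not selected do not update. The regret of the master is $R(T)=T\mu^*-\mathbb{E}\big[\sum_{t=1}^T\mu_{a_t}\big]$, the expectation being over all randomness (including the random order of the bases). *)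

theory Defs
  imports "HOL-Probability.Probability"
begin

type_synonym env = "bool \<Rightarrow> real pmf"

text \<open>A (possibly randomized) base algorithm, in behavioural form: given its own past
  observations (arms it played and rewards it received, only in rounds where it was
  selected), it gives the distribution of the next arm.\<close>
type_synonym base_alg = "(bool \<times> real) list \<Rightarrow> bool pmf"

text \<open>A (possibly randomized) master over M = 2 bases (indices are \<open>bool\<close>), in behavioural
  form: given its past observations (selected indices and observed rewards), it gives the
  distribution of the next index.\<close>
type_synonym master_alg = "(bool \<times> real) list \<Rightarrow> bool pmf"

text \<open>System state: master history, histories of the two base slots, arms played so far.\<close>
type_synonym sys_state = "(bool \<times> real) list \<times> (bool \<Rightarrow> (bool \<times> real) list) \<times> bool list"

definition arm_mean :: "env \<Rightarrow> bool \<Rightarrow> real" where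
  "arm_mean nu a = measure_pmf.expectation (nu a) (\<lambda>x. x)"

definition opt_mean :: "env \<Rightarrow> real" where
  "opt_mean nu = max (arm_mean nu True) (arm_mean nu False)"

definition sys_step :: "env \<Rightarrow> (bool \<Rightarrow> base_alg) \<Rightarrow> master_alg \<Rightarrow> sys_state \<Rightarrow> sys_state pmf" where
  "sys_step nu B m s = (case s of (mh, bh, arms) \<Rightarrow>
     bind_pmf (m mh) (\<lambda>j.
     bind_pmf (B j (bh j)) (\<lambda>a.
     bind_pmf (nu a) (\<lambda>r.
     return_pmf (mh @ [(j, r)], bh(j := bh j @ [(a, r)]), arms @ [a])))))"

fun sys_run :: "env \<Rightarrow> (bool \<Rightarrow> base_alg) \<Rightarrow> master_alg \<Rightarrow> nat \<Rightarrow> sys_state pmf" where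
  "sys_run nu B m 0 = return_pmf ([], (\<lambda>_. []), [])"
| "sys_run nu B m (Suc t) = bind_pmf (sys_run nu B m t) (sys_step nu B m)"

definition expected_reward :: "env \<Rightarrow> (bool \<Rightarrow> base_alg) \<Rightarrow> master_alg \<Rightarrow> nat \<Rightarrow> real" where
  "expected_reward nu B m T =
     measure_pmf.expectation (sys_run nu B m T) (\<lambda>s. \<Sum>a\<leftarrow>snd (snd s). arm_mean nu a)"

text \<open>Regret of master m when bases B1, B2 are put into the two slots in a uniformly
  random order (averaging over the two orders).\<close>
definition master_regret :: "env \<Rightarrow> base_alg \<Rightarrow> base_alg \<Rightarrow> master_alg \<Rightarrow> nat \<Rightarrow> real" where
  "master_regret nu B1 B2 m T =
     real T * opt_mean nu
     - (1/2) * (expected_reward nu (\<lambda>j. if j then B2 else B1) m T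
              + expected_reward nu (\<lambda>j. if j then B1 else B2) m T)"

end

theory Submission
  imports Defs
begin

text \<open>
  Arm \<open>True\<close> pays a fair coin and arm \<open>False\<close> pays 0. The first base always plays
  \<open>True\<close>; the second plays \<open>False\<close> with probability \<open>\<epsilon>(n) = 1 / (20 \<surd>(n+3) ln (n+3))\<close>
  after \<open>n\<close> earlier calls, so \<open>k\<close> calls to it cost \<open>S(k) = \<Sum>n<k. \<epsilon>(n)/2\<close>, and
  \<open>S(T) \<ge> \<surd>T / (160 ln T)\<close>. The master sees only slot indices and rewards, and the two
  slots differ only by a reward bias \<open>\<epsilon>(n)\<close>. Because \<open>\<Sum> \<epsilon>(n)\<^sup>2\<close> is bounded, the
  likelihood ratio \<open>L\<close> between the two slot orders satisfies \<open>E L = 1\<close> and \<open>E L\<^sup>2 \<le> 1.03\<close>.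
  Changing measure, twice the averaged regret is \<open>E[S(k\<^sub>1) + L S(k\<^sub>2)]\<close> with
  \<open>k\<^sub>1 + k\<^sub>2 = T\<close>; subadditivity of \<open>S\<close> and \<open>|L - 1| \<le> 1/4 + (L - 1)\<^sup>2\<close> bound this
  below by \<open>S(T)/2\<close>.
\<close>

lemma expectation_bind_pmf_finite:
  fixes h :: "'b \<Rightarrow> real"
  assumes "finite (set_pmf p)" "\<And>x. x \<in> set_pmf p \<Longrightarrow> finite (set_pmf (f x))"
  shows "measure_pmf.expectation (bind_pmf p f) h =
         measure_pmf.expectation p (\<lambda>x. measure_pmf.expectation (f x) h)"
  using assms by (simp add: pmf_expectation_bind[of "set_pmf p"] integral_measure_pmf[of "set_pmf p"])

lemma expectation_cong_pmf:
  fixes f g :: "'a \<Rightarrow> real"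
  assumes "\<And>x. x \<in> set_pmf p \<Longrightarrow> f x = g x"
  shows "measure_pmf.expectation p f = measure_pmf.expectation p g"
  using assms by (intro integral_cong_AE) (auto simp: AE_measure_pmf_iff)

lemma expectation_mono_pmf_finite:
  fixes f g :: "'a \<Rightarrow> real"
  assumes "finite (set_pmf p)" "\<And>x. x \<in> set_pmf p \<Longrightarrow> f x \<le> g x"
  shows "measure_pmf.expectation p f \<le> measure_pmf.expectation p g"
  using assms
  by (intro integral_mono_AE) (auto simp: AE_measure_pmf_iff integrable_measure_pmf_finite)

lemma finite_set_pmf_sys_step:
  assumes "\<And>a. finite (set_pmf (nu a))"
  shows "finite (set_pmf (sys_step nu B m s))"
  using assms unfolding sys_step_def by (auto split: prod.splits)

lemma finite_set_pmf_sys_run: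
  assumes "\<And>a. finite (set_pmf (nu a))"
  shows "finite (set_pmf (sys_run nu B m t))"
  by (induction t) (auto simp: finite_set_pmf_sys_step assms)

lemma expectation_sys_run_Suc:
  fixes F :: "sys_state \<Rightarrow> real"
  assumes "\<And>a. finite (set_pmf (nu a))"
  shows "measure_pmf.expectation (sys_run nu B m (Suc t)) F =
         measure_pmf.expectation (sys_run nu B m t) (\<lambda>s. measure_pmf.expectation (sys_step nu B m s) F)"
  by (simp add: expectation_bind_pmf_finite finite_set_pmf_sys_run finite_set_pmf_sys_step assms)

lemma expectation_sys_step:
  fixes F :: "sys_state \<Rightarrow> real"
  assumes "\<And>a. finite (set_pmf (nu a))"
  shows "measure_pmf.expectation (sys_step nu B m (mh, bh, arms)) F =
    measure_pmf.expectation (m mh) (\<lambda>j. measure_pmf.expectation (B j (bh j)) (\<lambda>a.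
      measure_pmf.expectation (nu a) (\<lambda>r. F (mh @ [(j, r)], bh(j := bh j @ [(a, r)]), arms @ [a]))))"
  unfolding sys_step_def using assms by (simp add: expectation_bind_pmf_finite)

definition slot_count :: "bool \<Rightarrow> (bool \<times> real) list \<Rightarrow> nat" where
  "slot_count j mh = length (filter (\<lambda>p. fst p = j) mh)"

lemma slot_count_Nil [simp]: "slot_count j [] = 0"
  by (simp add: slot_count_def)

lemma slot_count_snoc [simp]:
  "slot_count j (mh @ [(j', r)]) = slot_count j mh + (if j' = j then 1 else 0)"
  by (simp add: slot_count_def)

lemma slot_count_True_add_False: "slot_count True mh + slot_count False mh = length mh"
  unfolding slot_count_def using sum_length_filter_compl[of fst mh] by simp

lemma set_pmf_sys_run_lengths:
  assumes "s \<in> set_pmf (sys_run nu B m t)"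
  shows "length (fst s) = t \<and> (\<forall>j. length (fst (snd s) j) = slot_count j (fst s))"
  using assms
proof (induction t arbitrary: s)
  case 0
  then show ?case by simp
next
  case (Suc t)
  then obtain s0 where prev: "s0 \<in> set_pmf (sys_run nu B m t)"
    and step: "s \<in> set_pmf (sys_step nu B m s0)"
    by auto
  obtain mh bh arms where s0: "s0 = (mh, bh, arms)"
    by (cases s0)
  from step obtain j a r where "s = (mh @ [(j, r)], bh(j := bh j @ [(a, r)]), arms @ [a])"
    unfolding s0 sys_step_def by auto
  with Suc.IH[OF prev] show ?case
    unfolding s0 by auto
qed

lemma ln_2_ge_half: "1/2 \<le> ln (2::real)"
proof -
  have "ln (1/2::real) \<le> 1/2 - 1"
    by (rule ln_le_minus_one) simp
  then show ?thesis
    by (simp add: ln_div)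
qed

lemma abs_le_quarter_add_sq: "\<bar>x\<bar> \<le> 1/4 + x^2" for x :: real
proof -
  have "0 \<le> (\<bar>x\<bar> - 1/2)^2"
    by simp
  then show ?thesis
    by (simp add: power2_eq_square algebra_simps abs_mult_self_eq)
qed

lemma prod_inverse_one_add_ge:
  fixes x :: "'a \<Rightarrow> real"
  assumes "finite A" "\<And>n. n \<in> A \<Longrightarrow> 0 \<le> x n" "\<And>n. n \<in> A \<Longrightarrow> x n \<le> 1"
  shows "1 - (\<Sum>n\<in>A. x n) \<le> (\<Prod>n\<in>A. 1 / (1 + x n))"
  using assms
proof (induction A rule: finite_induct)
  case empty
  then show ?case by simp
next
  case (insert k A)
  define P S where "P = (\<Prod>n\<in>A. 1 / (1 + x n))" and "S = (\<Sum>n\<in>A. x n)"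
  have x: "0 \<le> x k" "x k \<le> 1"
    using insert.prems by auto
  have "0 \<le> S"
    unfolding S_def using insert.prems by (intro sum_nonneg) auto
  have "0 \<le> P"
    unfolding P_def using insert.prems by (intro prod_nonneg) auto
  have IH: "1 - S \<le> P"
    unfolding P_def S_def using insert by auto
  have Bernoulli: "1 - x k \<le> 1 / (1 + x k)"
    using x by (simp add: field_simps power2_eq_square[symmetric])
  have "1 - (S + x k) \<le> (1 - S) * (1 - x k)"
    using \<open>0 \<le> S\<close> x by (simp add: algebra_simps)
  also have "\<dots> \<le> P * (1 - x k)"
    using IH x by (intro mult_right_mono) auto
  also have "\<dots> \<le> P * (1 / (1 + x k))"
    using \<open>0 \<le> P\<close> Bernoulli by (intro mult_left_mono)
  finally show ?case
    using insert.hyps by (simp add: P_def S_def add.commute)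
qed

lemma sum_lessThan_add_le_of_antimono:
  fixes f :: "nat \<Rightarrow> 'a::ordered_comm_monoid_add"
  assumes "antimono f"
  shows "(\<Sum>n<a + b. f n) \<le> (\<Sum>n<a. f n) + (\<Sum>n<b. f n)"
proof (induction b)
  case 0
  then show ?case by simp
next
  case (Suc b)
  have "f (a + b) \<le> f b"
    using assms by (rule antimonoD) simp
  with Suc have "(\<Sum>n<a + b. f n) + f (a + b) \<le> ((\<Sum>n<a. f n) + (\<Sum>n<b. f n)) + f b"
    by (rule add_mono)
  then show ?case
    by (simp add: add.assoc)
qed

section \<open>The exploration schedule\<close>

definition explore_rate :: "nat \<Rightarrow> real" where
  "explore_rate n = 1 / (20 * (sqrt (real n + 3) * ln (real n + 3)))"

lemma explore_rate_pos: "0 < explore_rate n"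
  by (simp add: explore_rate_def)

lemma explore_rate_le: "explore_rate n \<le> 1/10"
proof -
  have "ln 2 \<le> ln (real n + 3)"
    by simp
  with ln_2_ge_half have "1/2 \<le> ln (real n + 3)"
    by linarith
  then have "1 * (1/2) \<le> sqrt (real n + 3) * ln (real n + 3)"
    by (intro mult_mono) auto
  then show ?thesis
    by (simp add: explore_rate_def field_simps)
qed

lemma explore_rate_sq_le_hundredth: "explore_rate n ^ 2 \<le> 1/100"
proof -
  have "explore_rate n * explore_rate n \<le> 1/10 * (1/10)"
    using explore_rate_pos[of n] explore_rate_le[of n] by (intro mult_mono) auto
  then show ?thesis
    by (simp add: power2_eq_square)
qed

lemma antimono_explore_rate: "antimono explore_rate"
proof
  fix n k :: nat
  assume "n \<le> k"
  then have "sqrt (real n + 3) * ln (real n + 3) \<le> sqrt (real k + 3) * ln (real k + 3)"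
    by (intro mult_mono) auto
  then show "explore_rate k \<le> explore_rate n"
    unfolding explore_rate_def by (intro divide_left_mono) auto
qed

text \<open>The squares telescope against \<open>1 / ln (n + 2)\<close>, so their sum stays bounded although
  \<open>\<Sum> explore_rate n\<close> grows like \<open>\<surd>T / ln T\<close>.\<close>
lemma explore_rate_sq_le:
  "explore_rate n ^ 2 \<le> (1 / ln (real n + 2) - 1 / ln (real n + 3)) / 400"
proof -
  define L2 L3 where "L2 = ln (real n + 2)" and "L3 = ln (real n + 3)"
  have "0 < L2" "L2 \<le> L3" "0 < L3"
    by (simp_all add: L2_def L3_def)
  have gap: "1 / (real n + 3) \<le> L3 - L2"
  proof -
    have "ln ((real n + 2) / (real n + 3)) \<le> (real n + 2) / (real n + 3) - 1"
      by (rule ln_le_minus_one) simp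
    then show ?thesis
      by (simp add: L2_def L3_def ln_div field_simps)
  qed
  have "400 * explore_rate n ^ 2 = (1 / (real n + 3)) / L3^2"
    by (simp add: explore_rate_def L3_def power_mult_distrib power_divide)
  also have "\<dots> \<le> (L3 - L2) / L3^2"
    using gap by (intro divide_right_mono) auto
  also have "\<dots> \<le> (L3 - L2) / (L2 * L3)"
    using \<open>0 < L2\<close> \<open>L2 \<le> L3\<close>
    by (intro divide_left_mono) (auto simp: power2_eq_square intro: mult_right_mono)
  also have "\<dots> = 1 / L2 - 1 / L3"
    using \<open>0 < L2\<close> \<open>L2 \<le> L3\<close> by (simp add: field_simps)
  finally show ?thesis
    by (simp add: L2_def L3_def)
qed

lemma sum_explore_rate_sq_le: "(\<Sum>n<k. explore_rate n ^ 2) \<le> 1/200"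
proof -
  define g where "g n = 1 / ln (real n + 2)" for n
  have g_Suc: "g (Suc n) = 1 / ln (real n + 3)" for n
    unfolding g_def by (rule arg_cong[where f = "\<lambda>y. 1 / ln y"]) simp
  have "explore_rate n ^ 2 \<le> (g n - g (Suc n)) / 400" for n
    unfolding g_Suc unfolding g_def by (rule explore_rate_sq_le)
  then have "(\<Sum>n<k. explore_rate n ^ 2) \<le> (\<Sum>n<k. g n - g (Suc n)) / 400"
    unfolding sum_divide_distrib by (intro sum_mono)
  also have "\<dots> = (g 0 - g k) / 400"
    by (simp add: sum_lessThan_telescope')
  also have "\<dots> \<le> 1/200"
  proof -
    have "g 0 \<le> 2"
      using ln_2_ge_half by (simp add: g_def field_simps)
    moreover have "0 \<le> g k"
      by (simp add: g_def)
    ultimately show ?thesis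
      by simp
  qed
  finally show ?thesis .
qed

text \<open>Expected regret of \<open>base_explore\<close> over its first \<open>k\<close> calls: arm \<open>False\<close> costs \<open>1/2\<close>.\<close>
definition bad_regret :: "nat \<Rightarrow> real" where
  "bad_regret k = (\<Sum>n<k. explore_rate n) / 2"

lemma bad_regret_Suc: "bad_regret (Suc k) = bad_regret k + explore_rate k / 2"
  by (simp add: bad_regret_def add_divide_distrib)

lemma bad_regret_nonneg: "0 \<le> bad_regret k"
  unfolding bad_regret_def using explore_rate_pos by (simp add: sum_nonneg less_imp_le)

lemma bad_regret_mono: "k \<le> l \<Longrightarrow> bad_regret k \<le> bad_regret l"
  unfolding bad_regret_def using explore_rate_pos
  by (simp add: divide_right_mono sum_mono2 less_imp_le)

lemma bad_regret_add_le: "bad_regret (k + l) \<le> bad_regret k + bad_regret l"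
  using sum_lessThan_add_le_of_antimono[OF antimono_explore_rate, of k l]
  by (simp add: bad_regret_def add_divide_distrib[symmetric] divide_right_mono)

lemma explore_rate_ge:
  assumes "2 \<le> T" "n < T"
  shows "1 / (80 * (sqrt (real T) * ln (real T))) \<le> explore_rate n"
proof -
  define x where "x = real T"
  have "2 \<le> x" "0 < ln x" "0 < sqrt x"
    using assms by (simp_all add: x_def)
  have sqrt_le: "sqrt (x + 2) \<le> 2 * sqrt x"
  proof -
    have "sqrt (x + 2) \<le> sqrt (4 * x)"
      using \<open>2 \<le> x\<close> by simp
    then show ?thesis
      by (simp add: real_sqrt_mult)
  qed
  have ln_le: "ln (x + 2) \<le> 2 * ln x"
  proof -
    have "x + 2 \<le> x * x"
      using \<open>2 \<le> x\<close> mult_right_mono[of 2 x x] by linarith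
    then have "ln (x + 2) \<le> ln (x * x)"
      using \<open>2 \<le> x\<close> by simp
    then show ?thesis
      using \<open>2 \<le> x\<close> by (simp add: ln_mult)
  qed
  have "sqrt (real n + 3) * ln (real n + 3) \<le> sqrt (x + 2) * ln (x + 2)"
    using assms by (intro mult_mono) (auto simp: x_def)
  also have "\<dots> \<le> (2 * sqrt x) * (2 * ln x)"
    using sqrt_le ln_le \<open>2 \<le> x\<close> by (intro mult_mono) auto
  finally have "sqrt (real n + 3) * ln (real n + 3) \<le> 4 * (sqrt x * ln x)"
    by simp
  with \<open>0 < sqrt x\<close> \<open>0 < ln x\<close> show ?thesis
    unfolding explore_rate_def x_def[symmetric] by (intro divide_left_mono) (auto intro: mult_pos_pos)
qed

lemma bad_regret_ge:
  assumes "2 \<le> T"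
  shows "sqrt (real T) / (160 * ln (real T)) \<le> bad_regret T"
proof -
  define x where "x = real T"
  have "2 \<le> x" "0 < ln x" "0 < sqrt x"
    using assms by (simp_all add: x_def)
  have "sqrt x / (160 * ln x) = (x / sqrt x) / (160 * ln x)"
    using \<open>2 \<le> x\<close> by (simp add: real_div_sqrt)
  also have "\<dots> = (\<Sum>n<T. 1 / (80 * (sqrt x * ln x))) / 2"
    using \<open>0 < sqrt x\<close> \<open>0 < ln x\<close> by (simp add: x_def field_simps)
  also have "\<dots> \<le> bad_regret T"
    unfolding bad_regret_def x_def using explore_rate_ge[OF assms]
    by (intro divide_right_mono sum_mono) auto
  finally show ?thesis
    by (simp add: x_def)
qed

section \<open>The instance and the master's view of it\<close>

definition coin_env :: env where
  "coin_env a = (if a then map_pmf (\<lambda>b. if b then 1 else 0) (bernoulli_pmf (1/2)) else return_pmf 0)"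

definition base_opt :: base_alg where
  "base_opt h = return_pmf True"

definition base_explore :: base_alg where
  "base_explore h = bernoulli_pmf (1 - explore_rate (length h))"

definition bases :: "bool \<Rightarrow> bool \<Rightarrow> base_alg" where
  "bases x j = (if j = x then base_explore else base_opt)"

abbreviation coin_run :: "bool \<Rightarrow> master_alg \<Rightarrow> nat \<Rightarrow> sys_state pmf" where
  "coin_run x m t \<equiv> sys_run coin_env (bases x) m t"

lemma finite_set_pmf_coin_env: "finite (set_pmf (coin_env a))"
  by (simp add: coin_env_def)

lemma expectation_coin_env:
  fixes K :: "real \<Rightarrow> real"
  shows "measure_pmf.expectation (coin_env a) K = (if a then (K 0 + K 1) / 2 else K 0)"
  by (simp add: coin_env_def)

lemma arm_mean_coin_env: "arm_mean coin_env a = (if a then 1/2 else 0)"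
  by (simp add: arm_mean_def expectation_coin_env)

lemma opt_mean_coin_env: "opt_mean coin_env = 1/2"
  by (simp add: opt_mean_def arm_mean_coin_env)

lemma finite_set_pmf_coin_run: "finite (set_pmf (coin_run x m t))"
  by (rule finite_set_pmf_sys_run[OF finite_set_pmf_coin_env])

text \<open>\<open>obs_prob x j n r\<close> is the probability that the master sees reward \<open>r \<in> {0, 1}\<close> when
  it selects slot \<open>j\<close>, already selected \<open>n\<close> times, and \<open>base_explore\<close> sits in slot \<open>x\<close>.\<close>
definition obs_prob :: "bool \<Rightarrow> bool \<Rightarrow> nat \<Rightarrow> real \<Rightarrow> real" where
  "obs_prob x j n r =
     (if j = x then (if r = 1 then 1 - explore_rate n else 1 + explore_rate n) / 2 else 1/2)"

lemma obs_prob_pos: "0 < obs_prob x j n r"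
  using explore_rate_pos[of n] explore_rate_le[of n] by (simp add: obs_prob_def)

definition next_hist_expectation ::
    "bool \<Rightarrow> master_alg \<Rightarrow> ((bool \<times> real) list \<Rightarrow> real) \<Rightarrow> (bool \<times> real) list \<Rightarrow> real" where
  "next_hist_expectation x m F mh = measure_pmf.expectation (m mh)
     (\<lambda>j. \<Sum>r\<in>{0,1}. obs_prob x j (slot_count j mh) r * F (mh @ [(j, r)]))"

lemma expectation_bases_coin_env:
  fixes K :: "real \<Rightarrow> real"
  shows "measure_pmf.expectation (bases x j h) (\<lambda>a. measure_pmf.expectation (coin_env a) K) =
   (\<Sum>r\<in>{0,1}. obs_prob x j (length h) r * K r)"
  using explore_rate_pos[of "length h"] explore_rate_le[of "length h"]
  by (auto simp: bases_def base_explore_def base_opt_def expectation_coin_env obs_prob_def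
      field_simps)

lemma expectation_coin_run_Suc_master_hist:
  "measure_pmf.expectation (coin_run x m (Suc t)) (\<lambda>s. F (fst s)) =
   measure_pmf.expectation (coin_run x m t) (\<lambda>s. next_hist_expectation x m F (fst s))"
proof -
  have "measure_pmf.expectation (sys_step coin_env (bases x) m s) (\<lambda>s'. F (fst s')) =
        next_hist_expectation x m F (fst s)"
    if "s \<in> set_pmf (coin_run x m t)" for s
  proof -
    obtain mh bh arms where s: "s = (mh, bh, arms)"
      by (cases s)
    have "length (bh j) = slot_count j mh" for j
      using set_pmf_sys_run_lengths[OF that] s by simp
    then show ?thesis
      unfolding s next_hist_expectation_def
      by (simp add: expectation_sys_step finite_set_pmf_coin_env expectation_bases_coin_env)
  qed
  then show ?thesis
    by (simp add: expectation_sys_run_Suc finite_set_pmf_coin_env cong: expectation_cong_pmf)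
qed

text \<open>Each round raises the expected reward plus the regret already caused by \<open>base_explore\<close>
  by exactly \<open>1/2\<close>.\<close>
definition reward_potential :: "bool \<Rightarrow> sys_state \<Rightarrow> real" where
  "reward_potential x s =
     (\<Sum>a\<leftarrow>snd (snd s). arm_mean coin_env a) + bad_regret (slot_count x (fst s))"

lemma expectation_reward_potential:
  "measure_pmf.expectation (coin_run x m t) (reward_potential x) = real t / 2"
proof (induction t)
  case 0
  then show ?case
    by (simp add: reward_potential_def bad_regret_def)
next
  case (Suc t)
  have step: "measure_pmf.expectation (sys_step coin_env (bases x) m s) (reward_potential x) =
              reward_potential x s + 1/2"
    if "s \<in> set_pmf (coin_run x m t)" for s
  proof -
    obtain mh bh arms where s: "s = (mh, bh, arms)"
      by (cases s)
    have len: "length (bh j) = slot_count j mh" for j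
      using set_pmf_sys_run_lengths[OF that] s by simp
    have rate: "0 \<le> explore_rate n" "explore_rate n \<le> 1" for n
      using explore_rate_pos[of n] explore_rate_le[of n] by simp_all
    have "measure_pmf.expectation (bases x j (bh j)) (\<lambda>a. measure_pmf.expectation (coin_env a)
            (\<lambda>r. reward_potential x (mh @ [(j, r)], bh(j := bh j @ [(a, r)]), arms @ [a]))) =
          reward_potential x s + 1/2" for j
      using rate
      by (cases "j = x")
        (simp_all add: s len expectation_coin_env reward_potential_def bases_def base_opt_def
          base_explore_def arm_mean_coin_env bad_regret_Suc field_simps)
    then show ?thesis
      unfolding s by (simp add: expectation_sys_step finite_set_pmf_coin_env)
  qed
  have "measure_pmf.expectation (coin_run x m (Suc t)) (reward_potential x) =
        measure_pmf.expectation (coin_run x m t) (\<lambda>s. reward_potential x s + 1/2)"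
    using step
    by (simp add: expectation_sys_run_Suc finite_set_pmf_coin_env cong: expectation_cong_pmf)
  also have "\<dots> = real t / 2 + 1/2"
    using Suc by (simp add: finite_set_pmf_coin_run integrable_measure_pmf_finite)
  finally show ?case
    by simp
qed

lemma expected_reward_bases:
  "expected_reward coin_env (bases x) m t =
   real t / 2 - measure_pmf.expectation (coin_run x m t) (\<lambda>s. bad_regret (slot_count x (fst s)))"
  using expectation_reward_potential[of x m t]
  unfolding expected_reward_def reward_potential_def
  by (simp add: finite_set_pmf_coin_run integrable_measure_pmf_finite)

section \<open>Change of measure between the two slot orders\<close>

text \<open>The master's own randomisation is the same under both slot orders, so only the reward
  probabilities enter the likelihood ratio.\<close>
definition reward_likelihood :: "bool \<Rightarrow> (bool \<times> real) list \<Rightarrow> real" where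
  "reward_likelihood x mh =
     (\<Prod>i<length mh. obs_prob x (fst (mh ! i)) (slot_count (fst (mh ! i)) (take i mh)) (snd (mh ! i)))"

lemma reward_likelihood_snoc:
  "reward_likelihood x (mh @ [(j, r)]) = reward_likelihood x mh * obs_prob x j (slot_count j mh) r"
proof -
  have "(\<Prod>i<length mh. obs_prob x (fst ((mh @ [(j, r)]) ! i))
          (slot_count (fst ((mh @ [(j, r)]) ! i)) (take i (mh @ [(j, r)]))) (snd ((mh @ [(j, r)]) ! i)))
        = reward_likelihood x mh"
    unfolding reward_likelihood_def by (rule prod.cong) (auto simp: nth_append)
  then show ?thesis
    by (simp add: reward_likelihood_def)
qed

lemma reward_likelihood_pos: "0 < reward_likelihood x mh"
  unfolding reward_likelihood_def by (intro prod_pos obs_prob_pos)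

definition likelihood_ratio :: "(bool \<times> real) list \<Rightarrow> real" where
  "likelihood_ratio mh = reward_likelihood False mh / reward_likelihood True mh"

lemma obs_prob_mult_likelihood_ratio_snoc:
  "obs_prob True j (slot_count j mh) r * likelihood_ratio (mh @ [(j, r)]) =
   likelihood_ratio mh * obs_prob False j (slot_count j mh) r"
  using reward_likelihood_pos[of True mh] obs_prob_pos[of True j "slot_count j mh" r]
  by (simp add: likelihood_ratio_def reward_likelihood_snoc field_simps)

lemma expectation_change_of_measure:
  "measure_pmf.expectation (coin_run False m t) (\<lambda>s. F (fst s)) =
   measure_pmf.expectation (coin_run True m t) (\<lambda>s. likelihood_ratio (fst s) * F (fst s))"
proof (induction t arbitrary: F)
  case 0
  then show ?case
    by (simp add: likelihood_ratio_def reward_likelihood_def)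
next
  case (Suc t)
  have step: "likelihood_ratio mh * next_hist_expectation False m F mh =
              next_hist_expectation True m (\<lambda>h. likelihood_ratio h * F h) mh" for mh
    unfolding next_hist_expectation_def
    by (simp add: distrib_left mult.assoc[symmetric] obs_prob_mult_likelihood_ratio_snoc
        flip: integral_mult_right_zero)
  have "measure_pmf.expectation (coin_run False m (Suc t)) (\<lambda>s. F (fst s)) =
        measure_pmf.expectation (coin_run False m t) (\<lambda>s. next_hist_expectation False m F (fst s))"
    by (rule expectation_coin_run_Suc_master_hist)
  also have "\<dots> = measure_pmf.expectation (coin_run True m t)
                     (\<lambda>s. likelihood_ratio (fst s) * next_hist_expectation False m F (fst s))"
    by (rule Suc.IH)
  also have "\<dots> = measure_pmf.expectation (coin_run True m t)
                     (\<lambda>s. next_hist_expectation True m (\<lambda>h. likelihood_ratio h * F h) (fst s))"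
    by (simp only: step)
  also have "\<dots> = measure_pmf.expectation (coin_run True m (Suc t))
                     (\<lambda>s. likelihood_ratio (fst s) * F (fst s))"
    by (rule expectation_coin_run_Suc_master_hist[symmetric])
  finally show ?case .
qed

lemma expectation_likelihood_ratio:
  "measure_pmf.expectation (coin_run True m t) (\<lambda>s. likelihood_ratio (fst s)) = 1"
  using expectation_change_of_measure[of m t "\<lambda>_. 1"] by simp

section \<open>Second moment of the likelihood ratio\<close>

lemma obs_prob_chi_sq_le:
  "(\<Sum>r\<in>{0,1}. obs_prob False j n r ^ 2 / obs_prob True j n r) \<le> 1 + 2 * explore_rate n ^ 2"
proof -
  define e where "e = explore_rate n"
  have "0 < e" "e \<le> 1/10"
    using explore_rate_pos[of n] explore_rate_le[of n] by (simp_all add: e_def)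
  show ?thesis
  proof (cases j)
    case True
    define y where "y = e^2"
    have "0 \<le> y" "y \<le> 1/2"
      using explore_rate_sq_le_hundredth[of n] by (simp_all add: y_def e_def)
    then have "y * y \<le> y / 2"
      using mult_left_mono[of y "1/2" y] by simp
    then have "1 \<le> (1 + 2 * y) * (1 - y)"
      by (simp add: algebra_simps)
    have "(\<Sum>r\<in>{0,1}. obs_prob False j n r ^ 2 / obs_prob True j n r) = 1 / (1 - y)"
      using True \<open>0 < e\<close> \<open>e \<le> 1/10\<close> \<open>y \<le> 1/2\<close>
      by (simp add: obs_prob_def e_def[symmetric] y_def divide_simps power2_eq_square)
        (simp add: algebra_simps)
    also have "\<dots> \<le> 1 + 2 * y"
      using \<open>1 \<le> (1 + 2 * y) * (1 - y)\<close> \<open>y \<le> 1/2\<close> by (simp add: divide_le_eq)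
    finally show ?thesis
      by (simp add: y_def e_def)
  next
    case False
    then have "(\<Sum>r\<in>{0,1}. obs_prob False j n r ^ 2 / obs_prob True j n r) = 1 + e^2"
      by (simp add: obs_prob_def e_def[symmetric] field_simps power2_eq_square)
    then show ?thesis
      by (simp add: e_def)
  qed
qed

definition chi_discount :: "nat \<Rightarrow> real" where
  "chi_discount k = (\<Prod>n<k. 1 / (1 + 2 * explore_rate n ^ 2))"

definition hist_discount :: "(bool \<times> real) list \<Rightarrow> real" where
  "hist_discount mh = chi_discount (slot_count True mh) * chi_discount (slot_count False mh)"

lemma hist_discount_snoc:
  "hist_discount (mh @ [(j, r)]) = hist_discount mh / (1 + 2 * explore_rate (slot_count j mh) ^ 2)"
  by (cases j) (simp_all add: hist_discount_def chi_discount_def)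

lemma chi_discount_ge: "99/100 \<le> chi_discount k"
proof -
  have "2 * explore_rate n ^ 2 \<le> 1" for n
    using explore_rate_sq_le_hundredth[of n] by simp
  then have "1 - (\<Sum>n<k. 2 * explore_rate n ^ 2) \<le> chi_discount k"
    unfolding chi_discount_def by (intro prod_inverse_one_add_ge) auto
  then show ?thesis
    using sum_explore_rate_sq_le[of k] by (simp add: sum_distrib_left[symmetric])
qed

lemma hist_discount_ge: "9801/10000 \<le> hist_discount mh"
proof -
  have "(99/100) * (99/100) \<le> hist_discount mh"
    unfolding hist_discount_def
    using chi_discount_ge[of "slot_count True mh"] chi_discount_ge[of "slot_count False mh"]
    by (intro mult_mono) auto
  then show ?thesis
    by simp
qed

text \<open>The discount absorbs the per-step chi-square factor, turning
  \<open>likelihood_ratio\<^sup>2 * hist_discount\<close> into a supermartingale under the first slot order.\<close>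
lemma next_hist_expectation_sq_ratio_discount_le:
  "next_hist_expectation True m (\<lambda>h. likelihood_ratio h ^ 2 * hist_discount h) mh
   \<le> likelihood_ratio mh ^ 2 * hist_discount mh"
proof -
  have "(\<Sum>r\<in>{0,1}. obs_prob True j (slot_count j mh) r *
           (likelihood_ratio (mh @ [(j, r)]) ^ 2 * hist_discount (mh @ [(j, r)])))
        \<le> likelihood_ratio mh ^ 2 * hist_discount mh" for j
  proof -
    define n where "n = slot_count j mh"
    define w where "w = 1 / (1 + 2 * explore_rate n ^ 2)"
    define c where "c = likelihood_ratio mh ^ 2 * hist_discount mh * w"
    have "0 \<le> c"
      using hist_discount_ge[of mh] by (simp add: c_def w_def)
    have snoc: "hist_discount (mh @ [(j, r)]) = hist_discount mh * w" for r
      by (simp add: hist_discount_snoc n_def w_def)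
    have "obs_prob True j n r * (likelihood_ratio (mh @ [(j, r)]) ^ 2 * hist_discount (mh @ [(j, r)]))
          = c * (obs_prob False j n r ^ 2 / obs_prob True j n r)" for r
    proof -
      have ratio: "likelihood_ratio (mh @ [(j, r)]) =
                   likelihood_ratio mh * obs_prob False j n r / obs_prob True j n r"
        using obs_prob_mult_likelihood_ratio_snoc[of j mh r] obs_prob_pos[of True j n r]
        by (simp add: n_def field_simps)
      show ?thesis
        unfolding ratio snoc c_def using obs_prob_pos[of True j n r]
        by (simp add: power2_eq_square field_simps)
    qed
    then have "(\<Sum>r\<in>{0,1}. obs_prob True j n r *
                 (likelihood_ratio (mh @ [(j, r)]) ^ 2 * hist_discount (mh @ [(j, r)])))
               = c * (\<Sum>r\<in>{0,1}. obs_prob False j n r ^ 2 / obs_prob True j n r)"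
      by (simp add: distrib_left)
    also have "\<dots> \<le> c * (1 + 2 * explore_rate n ^ 2)"
      using \<open>0 \<le> c\<close> obs_prob_chi_sq_le by (rule mult_left_mono[rotated])
    also have "\<dots> = likelihood_ratio mh ^ 2 * hist_discount mh"
      using add_pos_nonneg[of 1 "2 * explore_rate n ^ 2"] by (simp add: c_def w_def)
    finally show ?thesis
      by (simp add: n_def)
  qed
  then have "next_hist_expectation True m (\<lambda>h. likelihood_ratio h ^ 2 * hist_discount h) mh
             \<le> measure_pmf.expectation (m mh) (\<lambda>_. likelihood_ratio mh ^ 2 * hist_discount mh)"
    unfolding next_hist_expectation_def by (intro expectation_mono_pmf_finite) auto
  then show ?thesis
    by simp
qed

lemma expectation_sq_ratio_discount_le:
  "measure_pmf.expectation (coin_run True m t)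
     (\<lambda>s. likelihood_ratio (fst s) ^ 2 * hist_discount (fst s)) \<le> 1"
proof (induction t)
  case 0
  then show ?case
    by (simp add: likelihood_ratio_def reward_likelihood_def hist_discount_def chi_discount_def)
next
  case (Suc t)
  have "measure_pmf.expectation (coin_run True m (Suc t))
          (\<lambda>s. likelihood_ratio (fst s) ^ 2 * hist_discount (fst s)) =
        measure_pmf.expectation (coin_run True m t) (\<lambda>s. next_hist_expectation True m
          (\<lambda>h. likelihood_ratio h ^ 2 * hist_discount h) (fst s))"
    by (rule expectation_coin_run_Suc_master_hist)
  also have "\<dots> \<le> measure_pmf.expectation (coin_run True m t)
                    (\<lambda>s. likelihood_ratio (fst s) ^ 2 * hist_discount (fst s))"
    by (intro expectation_mono_pmf_finite finite_set_pmf_coin_run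
        next_hist_expectation_sq_ratio_discount_le)
  also have "\<dots> \<le> 1"
    by (rule Suc.IH)
  finally show ?case .
qed

lemma expectation_likelihood_ratio_sq_le:
  "measure_pmf.expectation (coin_run True m t) (\<lambda>s. likelihood_ratio (fst s) ^ 2) \<le> 10000/9801"
proof -
  have "likelihood_ratio mh ^ 2 \<le> 10000/9801 * (likelihood_ratio mh ^ 2 * hist_discount mh)" for mh
    using mult_left_mono[OF hist_discount_ge[of mh], of "likelihood_ratio mh ^ 2"] by simp
  then have "measure_pmf.expectation (coin_run True m t) (\<lambda>s. likelihood_ratio (fst s) ^ 2)
             \<le> measure_pmf.expectation (coin_run True m t)
                 (\<lambda>s. 10000/9801 * (likelihood_ratio (fst s) ^ 2 * hist_discount (fst s)))"
    by (intro expectation_mono_pmf_finite finite_set_pmf_coin_run)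
  also have "\<dots> = 10000/9801 * measure_pmf.expectation (coin_run True m t)
                 (\<lambda>s. likelihood_ratio (fst s) ^ 2 * hist_discount (fst s))"
    by simp
  also have "\<dots> \<le> 10000/9801"
    using expectation_sq_ratio_discount_le[of m t] by simp
  finally show ?thesis .
qed

lemma reweighted_split_ge:
  fixes A B S L :: real
  assumes "S \<le> A + B" "0 \<le> B" "B \<le> S"
  shows "S * (3/4 - (L - 1)^2) \<le> A + L * B"
proof -
  have "\<bar>L - 1\<bar> * B \<le> \<bar>L - 1\<bar> * S"
    using assms by (intro mult_left_mono) auto
  moreover have "\<bar>L - 1\<bar> * S \<le> (1/4 + (L - 1)^2) * S"
    using assms abs_le_quarter_add_sq[of "L - 1"] by (intro mult_right_mono) auto
  moreover have "- (\<bar>L - 1\<bar> * B) \<le> (L - 1) * B"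
    using abs_ge_minus_self[of "(L - 1) * B"] \<open>0 \<le> B\<close> by (simp add: abs_mult)
  ultimately show ?thesis
    using \<open>S \<le> A + B\<close> by (simp add: algebra_simps)
qed

lemma bad_regret_both_orders_ge:
  "bad_regret t / 2 \<le>
     measure_pmf.expectation (coin_run True m t) (\<lambda>s. bad_regret (slot_count True (fst s))) +
     measure_pmf.expectation (coin_run False m t) (\<lambda>s. bad_regret (slot_count False (fst s)))"
proof -
  define S where "S = bad_regret t"
  let ?E = "measure_pmf.expectation (coin_run True m t)"
  let ?L = "\<lambda>s. likelihood_ratio (fst s)"
  have "0 \<le> S"
    by (simp add: S_def bad_regret_nonneg)
  then have "S / 2 \<le> S * (7/4 - ?E (\<lambda>s. ?L s ^ 2))"
    using expectation_likelihood_ratio_sq_le[of m t]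
      mult_left_mono[of "?E (\<lambda>s. ?L s ^ 2)" "10000/9801" S]
    by (simp add: algebra_simps)
  also have "\<dots> = ?E (\<lambda>s. S * (3/4 - (?L s - 1)^2))"
    using expectation_likelihood_ratio[of m t]
    by (simp add: power2_diff algebra_simps finite_set_pmf_coin_run integrable_measure_pmf_finite)
  also have "\<dots> \<le> ?E (\<lambda>s. bad_regret (slot_count True (fst s)) +
                           ?L s * bad_regret (slot_count False (fst s)))"
  proof (intro expectation_mono_pmf_finite finite_set_pmf_coin_run reweighted_split_ge)
    fix s
    assume s: "s \<in> set_pmf (coin_run True m t)"
    then have "slot_count True (fst s) + slot_count False (fst s) = t"
      using set_pmf_sys_run_lengths[OF s] slot_count_True_add_False by simp
    then show "S \<le> bad_regret (slot_count True (fst s)) + bad_regret (slot_count False (fst s))"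
      and "bad_regret (slot_count False (fst s)) \<le> S"
      using bad_regret_add_le bad_regret_mono unfolding S_def by (metis le_add2)+
    show "0 \<le> bad_regret (slot_count False (fst s))"
      by (rule bad_regret_nonneg)
  qed
  also have "\<dots> = ?E (\<lambda>s. bad_regret (slot_count True (fst s))) +
                  measure_pmf.expectation (coin_run False m t) (\<lambda>s. bad_regret (slot_count False (fst s)))"
    using expectation_change_of_measure[of m t "\<lambda>h. bad_regret (slot_count False h)"]
    by (simp add: finite_set_pmf_coin_run integrable_measure_pmf_finite)
  finally show ?thesis
    by (simp add: S_def)
qed

lemma master_regret_coin_env_ge:
  assumes "2 \<le> T"
  shows "sqrt (real T) / (640 * ln (real T)) \<le> master_regret coin_env base_opt base_explore m T"
proof -
  have "(\<lambda>j. if j then base_explore else base_opt) = bases True"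
    and "(\<lambda>j. if j then base_opt else base_explore) = bases False"
    by (auto simp: bases_def)
  then have "master_regret coin_env base_opt base_explore m T =
    (measure_pmf.expectation (coin_run True m T) (\<lambda>s. bad_regret (slot_count True (fst s))) +
     measure_pmf.expectation (coin_run False m T) (\<lambda>s. bad_regret (slot_count False (fst s)))) / 2"
    by (simp add: master_regret_def expected_reward_bases opt_mean_coin_env field_simps)
  also have "\<dots> \<ge> bad_regret T / 4"
    using bad_regret_both_orders_ge[of T m] by simp
  also have "bad_regret T / 4 \<ge> sqrt (real T) / (640 * ln (real T))"
    using bad_regret_ge[OF assms] by simp
  finally show ?thesis .
qed

theorem mainTheorem2:
  shows "\<exists>(nu::env) (B1::base_alg) (B2::base_alg).
    (\<forall>a. set_pmf (nu a) \<subseteq> {0..1}) \<and>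
    (\<forall>h. set_pmf (B1 h) \<subseteq> {a. arm_mean nu a = opt_mean nu}) \<and>
    (\<exists>c>0. \<exists>T0::nat. \<forall>m::master_alg. \<forall>T\<ge>T0.
        master_regret nu B1 B2 m T \<ge> c * sqrt (real T) / ln (real T))"
proof (rule exI[of _ coin_env], rule exI[of _ base_opt], rule exI[of _ base_explore], intro conjI)
  show "\<forall>a. set_pmf (coin_env a) \<subseteq> {0..1}"
    by (auto simp: coin_env_def)
  show "\<forall>h. set_pmf (base_opt h) \<subseteq> {a. arm_mean coin_env a = opt_mean coin_env}"
    by (simp add: base_opt_def arm_mean_coin_env opt_mean_coin_env)
  show "\<exists>c>0. \<exists>T0::nat. \<forall>m. \<forall>T\<ge>T0.
          master_regret coin_env base_opt base_explore m T \<ge> c * sqrt (real T) / ln (real T)"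
    using master_regret_coin_env_ge
    by (intro exI[of _ "1/640"] conjI exI[of _ "2::nat"] allI impI) simp_all
qed

end
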